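(* For every $n\ge2$ and all integers $n_a\ge n_b\ge1$ with $n_a+n_b=n$, $$\mathcal{C}(T^{mb}_n)\le \mathcal{C}(T^{mb}_{n_a})+\mathcal{C}(T^{mb}_{n_b})+n_a-n_b.$$
   Context: Bifurcating trees: rooted trees in which every internal node has exactly two children; considered up to isomorphism. For a node $w$ of $T$, $\kappa_T(w)$ is its number of descendant leaves. The Colless index is $\mathcal{C}(T)=\sum_{v}|\kappa_T(v_1)-\kappa_T(v_2)|$, summed over internal nodes $v$ with children $v_1,v_2$. An internal node is balanced if the numbers of descendant leaves of its two children differ by at most 1. A bifurcating tree is maximally balanced if all its internal nodes are balanced; for each $n\ge1$ there is a unique such tree with $n$ leaves, denoted $T^{mb}_n$, and for $n\ge2$ its two subtrees rooted at the children of the root are $T^{mb}_{\lceil n/2\rceil}$ and $T^{mb}_{\lfloor n/2\rfloor}$. *)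

theory Defs
  imports Main
begin

datatype btree = Leaf | Node btree btree

fun kappa :: "btree \<Rightarrow> nat" where
  "kappa Leaf = 1"
| "kappa (Node l r) = kappa l + kappa r"

fun colless :: "btree \<Rightarrow> int" where
  "colless Leaf = 0"
| "colless (Node l r) = \<bar>int (kappa l) - int (kappa r)\<bar> + colless l + colless r"

fun max_balanced :: "btree \<Rightarrow> bool" where
  "max_balanced Leaf = True"
| "max_balanced (Node l r) = (\<bar>int (kappa l) - int (kappa r)\<bar> \<le> 1 \<and> max_balanced l \<and> max_balanced r)"

function mb :: "nat \<Rightarrow> btree" where
  "mb n = (if n \<le> 1 then Leaf else Node (mb ((n + 1) div 2)) (mb (n div 2)))"
  by auto
termination by (relation "measure id") auto

declare mb.simps[simp del]

end

theory Submission
  imports Defs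
begin

text \<open>Write \<open>c n\<close> for the Colless index of the maximally balanced tree with \<open>n\<close> leaves; it obeys
  \<open>c (2k) = 2 c k\<close> and \<open>c (2k+1) = 1 + c (k+1) + c k\<close> for \<open>k \<ge> 1\<close>. The symmetric inequality
  \<open>c (x+y) \<le> c x + c y + |x - y|\<close> is proved by strong induction on \<open>x + y\<close>: writing \<open>x\<close> and \<open>y\<close>
  as \<open>2a + p\<close> and \<open>2b + q\<close>, the recurrence expresses \<open>c (x+y)\<close> through one or two values
  \<open>c (a'+b')\<close> with \<open>a' \<in> {a, a+1}\<close>, \<open>b' \<in> {b, b+1}\<close>, to which the induction hypothesis
  applies, and the resulting absolute values add up to at most \<open>|x - y|\<close>. Since the
  recurrence fails at \<open>k = 0\<close>, a summand equal to 1 is handled on its own.\<close>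

lemma kappa_mb: "1 \<le> n \<Longrightarrow> kappa (mb n) = n"
proof (induction n rule: mb.induct)
  case (1 n)
  then show ?case
    by (subst mb.simps) (simp; presburger)
qed

definition colless_mb :: "nat \<Rightarrow> int" where
  "colless_mb n = colless (mb n)"

lemma colless_mb_one [simp]: "colless_mb 1 = 0" "colless_mb (Suc 0) = 0"
  by (simp_all add: colless_mb_def mb.simps)

lemma colless_mb_rec:
  assumes "2 \<le> n"
  shows "colless_mb n = int (n mod 2) + colless_mb ((n + 1) div 2) + colless_mb (n div 2)"
proof -
  have "\<bar>int ((n + 1) div 2) - int (n div 2)\<bar> = int (n mod 2)"
    by (cases "even n") (auto elim!: evenE oddE)
  then show ?thesis
    using assms by (simp add: colless_mb_def mb.simps[of n] kappa_mb)
qed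

lemma colless_mb_double: "1 \<le> k \<Longrightarrow> colless_mb (2 * k) = 2 * colless_mb k"
  using colless_mb_rec[of "2 * k"] by simp

lemma colless_mb_Suc_double:
  "1 \<le> k \<Longrightarrow> colless_mb (2 * k + 1) = 1 + colless_mb (k + 1) + colless_mb k"
  using colless_mb_rec[of "2 * k + 1"] by simp

lemma colless_mb_add_one_le:
  assumes "1 \<le> x"
    and "2 \<le> x \<Longrightarrow> colless_mb (x div 2 + 1)
           \<le> colless_mb (x div 2) + colless_mb 1 + \<bar>int (x div 2) - 1\<bar>"
  shows "colless_mb (x + 1) \<le> colless_mb x + colless_mb 1 + \<bar>int x - 1\<bar>"
proof -
  define a where "a = x div 2"
  have x: "x = 2 * a \<or> x = 2 * a + 1"
    by (auto simp: a_def)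
  show ?thesis
  proof (cases "a = 0")
    case True
    with assms(1) x have "x = 1"
      by auto
    then show ?thesis
      using colless_mb_double[of 1] by (simp add: numeral_2_eq_2)
  next
    case False
    then have "2 \<le> x"
      using x by auto
    from assms(2)[OF this, folded a_def]
    have IH: "colless_mb (a + 1) \<le> colless_mb a + int a - 1"
      using False by simp
    have Suc_double: "colless_mb (2 * a + 1) = 1 + colless_mb (a + 1) + colless_mb a"
      using False colless_mb_Suc_double[of a] by simp
    from x show ?thesis
    proof
      assume "x = 2 * a"
      then show ?thesis
        using False IH Suc_double colless_mb_double[of a] by simp
    next
      assume x: "x = 2 * a + 1"
      then have "x + 1 = 2 * (a + 1)"
        by simp
      then show ?thesis
        using x IH Suc_double colless_mb_double[of "a + 1"] by simp
    qed
  qed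
qed

lemma colless_mb_double_add_double_le:
  assumes "1 \<le> a" "1 \<le> b"
    and "colless_mb (a + b) \<le> colless_mb a + colless_mb b + \<bar>int a - int b\<bar>"
  shows "colless_mb (2 * a + 2 * b) \<le> colless_mb (2 * a) + colless_mb (2 * b)
           + \<bar>int (2 * a) - int (2 * b)\<bar>"
proof -
  have "colless_mb (2 * a + 2 * b) = 2 * colless_mb (a + b)"
    using assms(1) colless_mb_double[of "a + b"] by simp
  moreover have "\<bar>int (2 * a) - int (2 * b)\<bar> = 2 * \<bar>int a - int b\<bar>"
    by (simp add: abs_if)
  ultimately show ?thesis
    using assms colless_mb_double[of a] colless_mb_double[of b] by simp
qed

lemma colless_mb_Suc_double_add_double_le:
  assumes "1 \<le> a" "1 \<le> b"
    and "colless_mb (a + 1 + b) \<le> colless_mb (a + 1) + colless_mb b + \<bar>int (a + 1) - int b\<bar>"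
    and "colless_mb (a + b) \<le> colless_mb a + colless_mb b + \<bar>int a - int b\<bar>"
  shows "colless_mb (2 * a + 1 + 2 * b) \<le> colless_mb (2 * a + 1) + colless_mb (2 * b)
           + \<bar>int (2 * a + 1) - int (2 * b)\<bar>"
proof -
  have "colless_mb (2 * a + 1 + 2 * b) = 1 + colless_mb (a + 1 + b) + colless_mb (a + b)"
    using assms(1) colless_mb_Suc_double[of "a + b"] by (simp add: algebra_simps)
  then show ?thesis
    using assms colless_mb_Suc_double[of a] colless_mb_double[of b] by simp
qed

lemma colless_mb_Suc_double_add_Suc_double_le:
  assumes "1 \<le> a" "1 \<le> b"
    and "colless_mb (a + 1 + b) \<le> colless_mb (a + 1) + colless_mb b + \<bar>int (a + 1) - int b\<bar>"
    and "colless_mb (a + (b + 1)) \<le> colless_mb a + colless_mb (b + 1) + \<bar>int a - int (b + 1)\<bar>"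
  shows "colless_mb (2 * a + 1 + (2 * b + 1)) \<le> colless_mb (2 * a + 1) + colless_mb (2 * b + 1)
           + \<bar>int (2 * a + 1) - int (2 * b + 1)\<bar>"
proof -
  have "colless_mb (2 * a + 1 + (2 * b + 1)) = 2 * colless_mb (a + b + 1)"
    using colless_mb_double[of "a + b + 1"] by (simp add: algebra_simps)
  then show ?thesis
    using assms colless_mb_Suc_double[of a] colless_mb_Suc_double[of b]
    by (simp add: algebra_simps)
qed

lemma colless_mb_add_le:
  "1 \<le> x \<Longrightarrow> 1 \<le> y \<Longrightarrow>
     colless_mb (x + y) \<le> colless_mb x + colless_mb y + \<bar>int x - int y\<bar>"
proof (induction "x + y" arbitrary: x y rule: less_induct)
  case less
  have IH: "colless_mb (u + v) \<le> colless_mb u + colless_mb v + \<bar>int u - int v\<bar>"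
    if "u + v < x + y" "1 \<le> u" "1 \<le> v" for u v
    using less.hyps that by blast
  have swap: "colless_mb (x + y) \<le> colless_mb x + colless_mb y + \<bar>int x - int y\<bar>"
    if "colless_mb (y + x) \<le> colless_mb y + colless_mb x + \<bar>int y - int x\<bar>"
    using that by (simp add: add.commute abs_minus_commute)
  consider "y = 1" | "x = 1" | "2 \<le> x" "2 \<le> y"
    using less.prems by linarith
  then show ?case
  proof cases
    case 1
    then show ?thesis
      using colless_mb_add_one_le[of x] IH[of "x div 2" 1] less.prems by fastforce
  next
    case 2
    then show ?thesis
      using swap colless_mb_add_one_le[of y] IH[of "y div 2" 1] less.prems by fastforce
  next
    case 3
    define a b where "a = x div 2" and "b = y div 2"
    have ab: "1 \<le> a" "1 \<le> b"
      using 3 by (simp_all add: a_def b_def)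
    have x: "x = 2 * a \<or> x = 2 * a + 1" and y: "y = 2 * b \<or> y = 2 * b + 1"
      by (auto simp: a_def b_def)
    show ?thesis
      using x y
    proof (elim disjE)
      assume "x = 2 * a" "y = 2 * b"
      then show ?thesis
        using colless_mb_double_add_double_le[OF ab] IH[of a b] ab by simp
    next
      assume "x = 2 * a" "y = 2 * b + 1"
      then show ?thesis
        using swap colless_mb_Suc_double_add_double_le[of b a] IH[of "b + 1" a] IH[of b a] ab
        by simp
    next
      assume "x = 2 * a + 1" "y = 2 * b"
      then show ?thesis
        using colless_mb_Suc_double_add_double_le[OF ab] IH[of "a + 1" b] IH[of a b] ab by simp
    next
      assume "x = 2 * a + 1" "y = 2 * b + 1"
      then show ?thesis
        using colless_mb_Suc_double_add_Suc_double_le[OF ab] IH[of "a + 1" b] IH[of a "b + 1"] ab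
        by simp
    qed
  qed
qed

theorem lemma3:
  fixes n na nb :: nat
  assumes "n \<ge> 2" and "na \<ge> nb" and "nb \<ge> 1" and "na + nb = n"
  shows "colless (mb n) \<le> colless (mb na) + colless (mb nb) + int na - int nb"
  using colless_mb_add_le[of na nb] assms unfolding colless_mb_def by simp

end
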